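(* Let $D$ be a digraph and $X, Y \subseteq V(D)$ such that no vertex of $X$ has an ingoing edge and no vertex of $Y$ has an outgoing edge. Let $D'$ be a subdigraph of $D$ obtained by deleting finitely many vertices of $D$ and then deleting finitely many edges from the resulting digraph, with $X, Y \subseteq V(D')$. If $X$ is incompressible to $Y$ in $D'$, then $X$ is incompressible to $Y$ in $D$.
   Context: Digraphs have no loops or parallel edges. An $(A,B)$-path is a directed path whose initial vertex is in $A$, whose terminal vertex is in $B$, and which is internally disjoint from $A \cup B$; an $(A,B)$-path-system is a set of pairwise vertex-disjoint $(A,B)$-paths. $V^-(\mathcal{P})$ and $V^+(\mathcal{P})$ are the sets of initial and terminal vertices of the paths in $\mathcal{P}$. In a digraph $H$, $A$ is joinable to $B$ if there is an $(A,B)$-path-system $\mathcal{P}$ in $H$ with $V^-(\mathcal{P}) = A$; the set of such systems is $\mathfrak{J}_H(A,B)$. If $A$ is joinable to $B$ in $H$, then $A$ is incompressible to $B$ in $H$ if $V^+(\mathcal{P}) = B$ for every $\mathcal{P} \in \mathfrak{J}_H(A,B)$. *)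

theory Defs
  imports Main
begin

definition digraph :: "'a set \<Rightarrow> ('a \<times> 'a) set \<Rightarrow> bool" where
  "digraph V E \<longleftrightarrow> E \<subseteq> V \<times> V \<and> (\<forall>v. (v, v) \<notin> E)"

definition dpath :: "'a set \<Rightarrow> ('a \<times> 'a) set \<Rightarrow> 'a list \<Rightarrow> bool" where
  "dpath V E p \<longleftrightarrow> p \<noteq> [] \<and> distinct p \<and> set p \<subseteq> V \<and>
     (\<forall>i. Suc i < length p \<longrightarrow> (p ! i, p ! Suc i) \<in> E)"

definition AB_path :: "'a set \<Rightarrow> ('a \<times> 'a) set \<Rightarrow> 'a set \<Rightarrow> 'a set \<Rightarrow> 'a list \<Rightarrow> bool" where
  "AB_path V E A B p \<longleftrightarrow> dpath V E p \<and> hd p \<in> A \<and> last p \<in> B \<and>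
     (\<forall>i. 0 < i \<and> i < length p - 1 \<longrightarrow> p ! i \<notin> A \<union> B)"

definition AB_path_system :: "'a set \<Rightarrow> ('a \<times> 'a) set \<Rightarrow> 'a set \<Rightarrow> 'a set \<Rightarrow> 'a list set \<Rightarrow> bool" where
  "AB_path_system V E A B P \<longleftrightarrow> (\<forall>p\<in>P. AB_path V E A B p) \<and>
     (\<forall>p\<in>P. \<forall>q\<in>P. p \<noteq> q \<longrightarrow> set p \<inter> set q = {})"

definition Vminus :: "'a list set \<Rightarrow> 'a set" where
  "Vminus P = hd ` P"

definition Vplus :: "'a list set \<Rightarrow> 'a set" where
  "Vplus P = last ` P"

definition joinings :: "'a set \<Rightarrow> ('a \<times> 'a) set \<Rightarrow> 'a set \<Rightarrow> 'a set \<Rightarrow> 'a list set set" where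
  "joinings V E A B = {P. AB_path_system V E A B P \<and> Vminus P = A}"

definition joinable :: "'a set \<Rightarrow> ('a \<times> 'a) set \<Rightarrow> 'a set \<Rightarrow> 'a set \<Rightarrow> bool" where
  "joinable V E A B \<longleftrightarrow> joinings V E A B \<noteq> {}"

definition incompressible :: "'a set \<Rightarrow> ('a \<times> 'a) set \<Rightarrow> 'a set \<Rightarrow> 'a set \<Rightarrow> bool" where
  "incompressible V E A B \<longleftrightarrow> joinable V E A B \<and>
     (\<forall>P\<in>joinings V E A B. Vplus P = B)"

end

theory Submission
  imports Defs
begin

text \<open>Suppose some joining P of X in D misses a vertex y of Y. Only finitely many paths of P meet
  the deleted vertices or the tails of the deleted edges; the others form a path system R in D'
  that misses a finite set X1 of sources, while more than card X1 vertices of Y are not terminal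
  vertices of R. Starting from a joining Q of X in D', an augmentation argument in the style of
  Menger's theorem either extends R to one more source at the cost of at most one of these
  vertices, or finds a separator through which Q and R recombine into a joining of X whose
  terminal vertices are those of R. By induction on card X1, some joining of X in D' misses a
  vertex of Y, contradicting incompressibility in D'.\<close>

lemma AB_pathD:
  assumes "AB_path V E A B p"
  shows "p \<noteq> []" "distinct p" "set p \<subseteq> V" "\<And>i. Suc i < length p \<Longrightarrow> (p ! i, p ! Suc i) \<in> E"
    "hd p \<in> A" "last p \<in> B" "\<And>i. 0 < i \<Longrightarrow> i < length p - 1 \<Longrightarrow> p ! i \<notin> A \<union> B"
  using assms unfolding AB_path_def dpath_def by auto

lemma AB_path_mono: "AB_path V' E' A B p \<Longrightarrow> V' \<subseteq> V \<Longrightarrow> E' \<subseteq> E \<Longrightarrow> AB_path V E A B p"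
  unfolding AB_path_def dpath_def by blast

lemma joinings_mono:
  "P \<in> joinings V' E' A B \<Longrightarrow> V' \<subseteq> V \<Longrightarrow> E' \<subseteq> E \<Longrightarrow> P \<in> joinings V E A B"
  unfolding joinings_def AB_path_system_def using AB_path_mono by blast

text \<open>The paths of a system are disjoint, so a vertex of the system lies on a unique path, which
  determines its successor, predecessor and distance to the terminal vertex.\<close>

definition sys_edge :: "'a list set \<Rightarrow> 'a \<Rightarrow> 'a \<Rightarrow> bool" where
  "sys_edge P v w \<longleftrightarrow> (\<exists>p\<in>P. \<exists>i. Suc i < length p \<and> p ! i = v \<and> p ! Suc i = w)"

definition sys_verts :: "'a list set \<Rightarrow> 'a set" where
  "sys_verts P = \<Union>(set ` P)"

definition sys_succ :: "'a list set \<Rightarrow> 'a \<Rightarrow> 'a" where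
  "sys_succ P v = (SOME w. sys_edge P v w)"

definition sys_pred :: "'a list set \<Rightarrow> 'a \<Rightarrow> 'a" where
  "sys_pred P w = (SOME v. sys_edge P v w)"

definition sys_rank :: "'a list set \<Rightarrow> 'a \<Rightarrow> nat" where
  "sys_rank P v = (SOME n. \<exists>p\<in>P. \<exists>i<length p. p ! i = v \<and> n = length p - Suc i)"

lemma sys_verts_iff: "v \<in> sys_verts P \<longleftrightarrow> (\<exists>p\<in>P. \<exists>i<length p. p ! i = v)"
  unfolding sys_verts_def by (auto simp: in_set_conv_nth)

context
  fixes V :: "'a set" and E :: "('a \<times> 'a) set" and A B :: "'a set" and P :: "'a list set"
  assumes P: "AB_path_system V E A B P"
begin

lemma sys_path: "p \<in> P \<Longrightarrow> AB_path V E A B p"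
  using P unfolding AB_path_system_def by auto

lemma sys_paths_meet: "p \<in> P \<Longrightarrow> q \<in> P \<Longrightarrow> v \<in> set p \<Longrightarrow> v \<in> set q \<Longrightarrow> p = q"
  using P unfolding AB_path_system_def by blast

lemma sys_nth_unique:
  assumes "p \<in> P" "q \<in> P" "i < length p" "j < length q" "p ! i = q ! j"
  shows "p = q \<and> i = j"
proof -
  have "p = q" using sys_paths_meet assms by (metis nth_mem)
  moreover have "distinct p" using AB_pathD(2)[OF sys_path[OF assms(1)]] .
  ultimately show ?thesis using assms(3-5) nth_eq_iff_index_eq by metis
qed

lemma sys_inj_on_hd: "inj_on hd P"
proof (rule inj_onI)
  fix p q assume "p \<in> P" "q \<in> P" "hd p = hd q"
  then show "p = q" using sys_paths_meet AB_pathD(1) sys_path by (metis hd_in_set)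
qed

lemma sys_inj_on_last: "inj_on last P"
proof (rule inj_onI)
  fix p q assume "p \<in> P" "q \<in> P" "last p = last q"
  then show "p = q" using sys_paths_meet AB_pathD(1) sys_path by (metis last_in_set)
qed

lemma finite_sys_paths_meeting:
  assumes "finite W"
  shows "finite {p \<in> P. set p \<inter> W \<noteq> {}}"
proof -
  let ?M = "{p \<in> P. set p \<inter> W \<noteq> {}}"
  define meet where "meet p = (SOME w. w \<in> set p \<inter> W)" for p
  have meet: "meet p \<in> set p \<inter> W" if "p \<in> ?M" for p
    using that some_in_eq[of "set p \<inter> W"] unfolding meet_def by simp
  have "inj_on meet ?M"
  proof (rule inj_onI)
    fix p q assume "p \<in> ?M" "q \<in> ?M" "meet p = meet q"
    then show "p = q" using meet[of p] meet[of q] sys_paths_meet by auto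
  qed
  moreover have "meet ` ?M \<subseteq> W" using meet by blast
  ultimately show ?thesis using assms by (meson finite_imageD finite_subset)
qed

lemma sys_edge_in_E: "sys_edge P v w \<Longrightarrow> (v, w) \<in> E"
  unfolding sys_edge_def using sys_path AB_pathD(4) by blast

lemma sys_edge_verts: "sys_edge P v w \<Longrightarrow> v \<in> sys_verts P \<and> w \<in> sys_verts P"
  unfolding sys_edge_def sys_verts_iff by (metis Suc_lessD)

lemma sys_edge_functional: "sys_edge P v w \<Longrightarrow> sys_edge P v w' \<Longrightarrow> w = w'"
  unfolding sys_edge_def by (metis Suc_lessD sys_nth_unique)

lemma sys_edge_injective: "sys_edge P v w \<Longrightarrow> sys_edge P v' w \<Longrightarrow> v = v'"
  unfolding sys_edge_def by (metis Suc_inject sys_nth_unique)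

lemma sys_succ_eq: "sys_edge P v w \<Longrightarrow> sys_succ P v = w"
  unfolding sys_succ_def by (metis sys_edge_functional someI)

lemma sys_pred_eq: "sys_edge P v w \<Longrightarrow> sys_pred P w = v"
  unfolding sys_pred_def by (metis sys_edge_injective someI)

lemma sys_edge_nth: "p \<in> P \<Longrightarrow> Suc i < length p \<Longrightarrow> sys_edge P (p ! i) (p ! Suc i)"
  unfolding sys_edge_def by blast

lemma sys_edge_succ:
  assumes "v \<in> sys_verts P" "v \<notin> B"
  shows "sys_edge P v (sys_succ P v)"
proof -
  obtain p i where p: "p \<in> P" "i < length p" "p ! i = v" using assms(1) sys_verts_iff by metis
  have "Suc i < length p"
  proof (rule ccontr)
    assume "\<not> Suc i < length p"
    then have "i = length p - 1" using p by simp
    then have "v = last p" using p AB_pathD(1)[OF sys_path[OF p(1)]] by (simp add: last_conv_nth)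
    then show False using AB_pathD(6)[OF sys_path[OF p(1)]] assms(2) by auto
  qed
  then have "sys_edge P v (p ! Suc i)" using sys_edge_nth[OF p(1)] p(3) by blast
  then show ?thesis using sys_succ_eq by simp
qed

lemma sys_edge_pred:
  assumes "w \<in> sys_verts P" "w \<notin> A"
  shows "sys_edge P (sys_pred P w) w"
proof -
  obtain p i where p: "p \<in> P" "i < length p" "p ! i = w" using assms(1) sys_verts_iff by metis
  have "i \<noteq> 0"
  proof
    assume "i = 0"
    then have "w = hd p" using p by (simp add: hd_conv_nth)
    then show False using AB_pathD(5)[OF sys_path[OF p(1)]] assms(2) by auto
  qed
  then have "sys_edge P (p ! (i - 1)) w" using sys_edge_nth[OF p(1), of "i - 1"] p by simp
  then show ?thesis using sys_pred_eq by simp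
qed

lemma Vplus_subset: "Vplus P \<subseteq> B"
  unfolding Vplus_def using sys_path AB_pathD(6) by blast

lemma Vminus_sys_verts: "Vminus P \<subseteq> sys_verts P"
  unfolding Vminus_def sys_verts_def using sys_path AB_pathD(1) by fastforce

lemma Vplus_sys_verts: "Vplus P \<subseteq> sys_verts P"
  unfolding Vplus_def sys_verts_def using sys_path AB_pathD(1) by fastforce

lemma sys_rank_nth:
  assumes "p \<in> P" "i < length p"
  shows "sys_rank P (p ! i) = length p - Suc i"
proof -
  have "\<exists>p'\<in>P. \<exists>i'<length p'. p' ! i' = p ! i \<and> sys_rank P (p ! i) = length p' - Suc i'"
    unfolding sys_rank_def by (rule someI_ex) (use assms in blast)
  then show ?thesis using sys_nth_unique assms by metis
qed

lemma sys_rank_decreasing: "sys_edge P v w \<Longrightarrow> sys_rank P w < sys_rank P v"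
  unfolding sys_edge_def using sys_rank_nth by (metis Suc_lessD diff_less_mono2 lessI)

end

locale sources_sinks =
  fixes V :: "'a set" and E :: "('a \<times> 'a) set" and X Y :: "'a set"
  assumes digraph: "digraph V E" and sources_in_V: "X \<subseteq> V"
    and source: "\<forall>x\<in>X. \<forall>u. (u, x) \<notin> E" and sink: "\<forall>y\<in>Y. \<forall>w. (y, w) \<notin> E"
begin

lemma edge_in_V: "(u, v) \<in> E \<Longrightarrow> u \<in> V \<and> v \<in> V"
  using digraph unfolding digraph_def by auto

lemma no_loop: "(u, u) \<notin> E"
  using digraph unfolding digraph_def by auto

lemma path_nth_not_source:
  assumes "AB_path V E X Y p" "0 < i" "i < length p"
  shows "p ! i \<notin> X"
  using AB_pathD(4)[OF assms(1), of "i - 1"] assms(2,3) source by auto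

context
  fixes P assumes P: "AB_path_system V E X Y P"
begin

lemma sys_verts_sink_Vplus:
  assumes "v \<in> sys_verts P" "v \<in> Y"
  shows "v \<in> Vplus P"
proof -
  obtain p i where p: "p \<in> P" "i < length p" "p ! i = v" using assms(1) sys_verts_iff by metis
  have "\<not> Suc i < length p"
    using AB_pathD(4)[OF sys_path[OF P p(1)]] p assms(2) sink by blast
  then have "i = length p - 1" using p by simp
  then have "v = last p" using p AB_pathD(1)[OF sys_path[OF P p(1)]] by (simp add: last_conv_nth)
  then show ?thesis unfolding Vplus_def using p by auto
qed

lemma sys_verts_source_Vminus:
  assumes "v \<in> sys_verts P" "v \<in> X"
  shows "v \<in> Vminus P"
proof -
  obtain p i where p: "p \<in> P" "i < length p" "p ! i = v" using assms(1) sys_verts_iff by metis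
  have "i = 0" using path_nth_not_source[OF sys_path[OF P p(1)]] p assms(2) by blast
  then have "v = hd p" using p by (simp add: hd_conv_nth)
  then show ?thesis unfolding Vminus_def using p by auto
qed

end

end

lemma funpow_reaches_if_Suc_reaches: "\<exists>n. (f^^n) (f v) \<in> Y \<Longrightarrow> \<exists>n. (f^^n) v \<in> Y"
  by (metis funpow_Suc_right o_apply)

text \<open>The path systems of the augmentation argument are orbits of a successor function f,
  followed from sources until they first reach Y. Injectivity of f keeps orbits from different sources
  apart, and since no edge enters X, an orbit never returns to a source.\<close>

locale successor_orbits = sources_sinks +
  fixes f :: "'a \<Rightarrow> 'a" and G :: "'a set"
  assumes succ_closed: "\<And>v. v \<in> G \<Longrightarrow> v \<notin> Y \<Longrightarrow> (v, f v) \<in> E \<and> f v \<in> G"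
    and succ_inj: "\<And>v v'. v \<in> G \<Longrightarrow> v' \<in> G \<Longrightarrow> v \<notin> Y \<Longrightarrow> v' \<notin> Y \<Longrightarrow> f v = f v' \<Longrightarrow> v = v'"
begin

lemma orbit_in_domain: "x \<in> G \<Longrightarrow> \<forall>k<i. (f^^k) x \<notin> Y \<Longrightarrow> (f^^i) x \<in> G"
proof (induction i)
  case 0 then show ?case by simp
next
  case (Suc i)
  then have "(f^^i) x \<in> G" "(f^^i) x \<notin> Y" by auto
  then show ?case using succ_closed by simp
qed

lemma orbit_edge: "x \<in> G \<Longrightarrow> \<forall>k\<le>i. (f^^k) x \<notin> Y \<Longrightarrow> ((f^^i) x, (f^^Suc i) x) \<in> E"
  using orbit_in_domain[of x i] succ_closed by auto

lemma orbit_cancel: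
  "x \<in> G \<Longrightarrow> x' \<in> G \<Longrightarrow> \<forall>k<i. (f^^k) x \<notin> Y \<Longrightarrow> \<forall>k<j. (f^^k) x' \<notin> Y \<Longrightarrow> i \<le> j
   \<Longrightarrow> (f^^i) x = (f^^j) x' \<Longrightarrow> x = (f^^(j - i)) x'"
proof (induction i arbitrary: j)
  case 0 then show ?case by simp
next
  case (Suc i)
  then obtain j' where j: "j = Suc j'" by (cases j) auto
  have "(f^^i) x \<in> G" "(f^^j') x' \<in> G" using orbit_in_domain Suc.prems j by auto
  moreover have "(f^^i) x \<notin> Y" "(f^^j') x' \<notin> Y" using Suc.prems j by auto
  moreover have "f ((f^^i) x) = f ((f^^j') x')" using Suc.prems(6) j by simp
  ultimately have "(f^^i) x = (f^^j') x'" using succ_inj by blast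
  then show ?case using Suc.IH[of j'] Suc.prems j by auto
qed

lemma orbit_source_start:
  assumes "(f^^m) x \<in> X" "x \<in> G" "\<forall>k<m. (f^^k) x \<notin> Y"
  shows "m = 0"
proof (rule ccontr)
  assume "m \<noteq> 0"
  then obtain m' where m: "m = Suc m'" by (cases m) auto
  have "((f^^m') x, (f^^m) x) \<in> E" using orbit_edge[of x m'] assms m by auto
  then show False using source assms(1) by blast
qed

lemma orbits_meet:
  assumes "x \<in> X \<inter> G" "x' \<in> X \<inter> G" "\<forall>k<i. (f^^k) x \<notin> Y" "\<forall>k<j. (f^^k) x' \<notin> Y"
    and "(f^^i) x = (f^^j) x'"
  shows "x = x' \<and> i = j"
proof -
  have *: "x = x' \<and> i = j"
    if "x \<in> X \<inter> G" "x' \<in> X \<inter> G" "\<forall>k<i. (f^^k) x \<notin> Y" "\<forall>k<j. (f^^k) x' \<notin> Y"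
      "(f^^i) x = (f^^j) x'" "i \<le> j" for x x' i j
  proof -
    have x: "x = (f^^(j - i)) x'" using orbit_cancel that by blast
    then have "j - i = 0" using orbit_source_start[of "j - i" x'] that by auto
    then show ?thesis using x that(6) by simp
  qed
  show ?thesis using *[OF assms] *[of x' x j i] assms by (cases "i \<le> j") auto
qed

definition sink_time :: "'a \<Rightarrow> nat" where
  "sink_time x = (LEAST n. (f^^n) x \<in> Y)"

definition orbit_path :: "'a \<Rightarrow> 'a list" where
  "orbit_path x = map (\<lambda>i. (f^^i) x) [0..<Suc (sink_time x)]"

lemma sink_time_reached: "\<exists>n. (f^^n) x \<in> Y \<Longrightarrow> (f^^sink_time x) x \<in> Y"
  unfolding sink_time_def by (rule LeastI_ex)

lemma before_sink_time: "k < sink_time x \<Longrightarrow> (f^^k) x \<notin> Y"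
  unfolding sink_time_def using not_less_Least by blast

lemma length_orbit_path: "length (orbit_path x) = Suc (sink_time x)"
  unfolding orbit_path_def by simp

lemma orbit_path_nth: "i \<le> sink_time x \<Longrightarrow> orbit_path x ! i = (f^^i) x"
  unfolding orbit_path_def by (simp del: upt_Suc)

lemma hd_orbit_path: "hd (orbit_path x) = x"
  unfolding orbit_path_def by (simp add: upt_conv_Cons del: upt_Suc)

lemma last_orbit_path: "last (orbit_path x) = (f^^sink_time x) x"
  unfolding orbit_path_def by simp

lemma orbit_path_AB_path:
  assumes x: "x \<in> X \<inter> G" and reaches: "\<exists>n. (f^^n) x \<in> Y"
  shows "AB_path V E X Y (orbit_path x)"
proof -
  let ?p = "orbit_path x"
  have nth: "i < length ?p \<Longrightarrow> ?p ! i = (f^^i) x" for i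
    using orbit_path_nth length_orbit_path by simp
  have "distinct ?p"
    unfolding distinct_conv_nth
    using orbits_meet[OF x x] before_sink_time length_orbit_path nth by force
  moreover have edge: "(?p ! i, ?p ! Suc i) \<in> E" if "Suc i < length ?p" for i
    using orbit_edge[of x i] x that before_sink_time length_orbit_path nth by auto
  moreover have "set ?p \<subseteq> V"
  proof
    fix v assume "v \<in> set ?p"
    then obtain i where i: "i < length ?p" "?p ! i = v" by (auto simp: in_set_conv_nth)
    then show "v \<in> V"
      using edge[of "i - 1"] edge_in_V nth[of 0] x sources_in_V by (cases i) auto
  qed
  moreover have "?p ! i \<notin> X \<union> Y" if "0 < i" "i < length ?p - 1" for i
    using edge[of "i - 1"] that source before_sink_time length_orbit_path nth by auto
  ultimately show ?thesis
    unfolding AB_path_def dpath_def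
    using x sink_time_reached[OF reaches] hd_orbit_path last_orbit_path
    by (metis IntD1 length_orbit_path list.size(3) nat.distinct(1))
qed

lemma orbit_paths_disjoint:
  assumes "x \<in> X \<inter> G" "x' \<in> X \<inter> G" "x \<noteq> x'"
  shows "set (orbit_path x) \<inter> set (orbit_path x') = {}"
proof (rule ccontr)
  assume "set (orbit_path x) \<inter> set (orbit_path x') \<noteq> {}"
  then obtain v where "v \<in> set (orbit_path x)" "v \<in> set (orbit_path x')" by blast
  then obtain i j where "i \<le> sink_time x" "j \<le> sink_time x'" "(f^^i) x = v" "(f^^j) x' = v"
    by (auto simp: in_set_conv_nth length_orbit_path orbit_path_nth less_Suc_eq_le)
  then show False using orbits_meet[OF assms(1,2), of i j] before_sink_time assms(3) by fastforce
qed

lemma orbit_path_system: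
  assumes starts: "St \<subseteq> X \<inter> G"
    and reaches: "\<And>x. x \<in> St \<Longrightarrow> \<exists>n. (f^^n) x \<in> Y"
    and enters_Y: "\<And>v. v \<in> G \<Longrightarrow> v \<notin> Y \<Longrightarrow> f v \<in> Y \<Longrightarrow> f v \<in> W"
    and starts_in_Y: "St \<inter> Y \<subseteq> W"
  shows "\<exists>T. AB_path_system V E X Y T \<and> Vminus T = St \<and> Vplus T \<subseteq> W"
proof (intro exI conjI)
  let ?T = "orbit_path ` St"
  show "AB_path_system V E X Y ?T"
    unfolding AB_path_system_def
    using orbit_path_AB_path orbit_paths_disjoint starts reaches by blast
  show "Vminus ?T = St" unfolding Vminus_def image_image hd_orbit_path by simp
  show "Vplus ?T \<subseteq> W"
  proof
    fix y assume "y \<in> Vplus ?T"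
    then obtain x where x: "x \<in> St" "y = (f^^sink_time x) x"
      unfolding Vplus_def using last_orbit_path by auto
    show "y \<in> W"
    proof (cases "sink_time x")
      case 0 then show ?thesis using x sink_time_reached[OF reaches[OF x(1)]] starts_in_Y by auto
    next
      case (Suc m)
      have "(f^^m) x \<in> G" using orbit_in_domain[of x m] x starts before_sink_time Suc by auto
      then show ?thesis
        using enters_Y[of "(f^^m) x"] sink_time_reached[OF reaches[OF x(1)]]
          before_sink_time x Suc by simp
    qed
  qed
qed

end

text \<open>Walks alternating with respect to R start in the sources X1 missed by R; u k is the vertex
  from which step k is taken and a k the vertex it arrives at. A step either uses an edge that is
  not an edge of R, or stays put (a k = u k) at an inner vertex of R in order to go on backwards
  along R. After arriving at a vertex of R the walk continues from its R-predecessor (retreat).\<close>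

locale augmentation = sources_sinks +
  fixes Q R :: "'a list set" and X1 :: "'a set"
  assumes Q_joining: "Q \<in> joinings V E X Y" and R_system: "AB_path_system V E X Y R"
    and R_Vminus: "Vminus R = X - X1" and missing_sources: "X1 \<subseteq> X"
begin

lemma Q_system: "AB_path_system V E X Y Q" and Q_Vminus: "Vminus Q = X"
  using Q_joining unfolding joinings_def by auto

abbreviation "VR \<equiv> sys_verts R"
abbreviation "VQ \<equiv> sys_verts Q"

lemma missing_not_in_R: "x \<in> X1 \<Longrightarrow> x \<notin> VR"
  using sys_verts_source_Vminus[OF R_system] R_Vminus missing_sources by blast

lemma sources_in_Q: "X \<subseteq> VQ"
  using Vminus_sys_verts[OF Q_system] Q_Vminus by simp

lemma covered_in_R: "X - X1 \<subseteq> VR"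
  using Vminus_sys_verts[OF R_system] R_Vminus by simp

definition alt_step :: "'a \<Rightarrow> 'a \<Rightarrow> bool" where
  "alt_step u b \<longleftrightarrow> ((u, b) \<in> E \<and> \<not> sys_edge R u b) \<or> (b = u \<and> u \<in> VR \<and> u \<notin> X \<and> u \<notin> Y)"

definition continues :: "'a \<Rightarrow> bool" where
  "continues b \<longleftrightarrow> b \<in> VR \<or> b \<notin> Y"

definition retreat :: "'a \<Rightarrow> 'a" where
  "retreat b = (if b \<in> VR then sys_pred R b else b)"

definition alt_walk :: "nat \<Rightarrow> (nat \<Rightarrow> 'a) \<Rightarrow> (nat \<Rightarrow> 'a) \<Rightarrow> bool" where
  "alt_walk n u a \<longleftrightarrow> u 0 \<in> X1 \<and> (\<forall>k\<le>n. alt_step (u k) (a k)) \<and>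
     (\<forall>k<n. continues (a k) \<and> u (Suc k) = retreat (a k))"

definition entered :: "'a \<Rightarrow> bool" where
  "entered b \<longleftrightarrow> (\<exists>n u a. alt_walk n u a \<and> a n = b)"

definition reachable :: "'a \<Rightarrow> bool" where
  "reachable v \<longleftrightarrow> v \<in> X1 \<or> (\<exists>b. entered b \<and> continues b \<and> v = retreat b)"

definition augmenting :: bool where
  "augmenting \<longleftrightarrow> (\<exists>n u a. alt_walk n u a \<and> a n \<in> Y \<and> a n \<notin> VR)"

lemma alt_step_not_source: "alt_step u b \<Longrightarrow> b \<notin> X"
  unfolding alt_step_def using source by auto

lemma alt_step_not_sink: "alt_step u b \<Longrightarrow> u \<notin> Y"
  unfolding alt_step_def using sink by auto

lemma alt_step_forward: "alt_step u b \<Longrightarrow> b \<noteq> u \<Longrightarrow> (u, b) \<in> E \<and> \<not> sys_edge R u b"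
  unfolding alt_step_def by auto

lemma alt_step_turn: "alt_step u u \<Longrightarrow> u \<in> VR \<and> u \<notin> X"
  unfolding alt_step_def using no_loop by auto

lemma retreat_edge: "b \<in> VR \<Longrightarrow> b \<notin> X \<Longrightarrow> sys_edge R (retreat b) b"
  unfolding retreat_def using sys_edge_pred[OF R_system] by simp

lemma retreat_inj:
  assumes "b \<notin> X" "b' \<notin> X" "retreat b = retreat b'"
  shows "b = b'"
proof (cases "b \<in> VR"; cases "b' \<in> VR")
  assume "b \<in> VR" "b' \<in> VR"
  then show ?thesis using retreat_edge assms sys_edge_functional[OF R_system] by metis
next
  assume "b \<in> VR" "b' \<notin> VR"
  then show ?thesis using retreat_edge assms sys_edge_verts[OF R_system] unfolding retreat_def
    by metis
next
  assume "b \<notin> VR" "b' \<in> VR"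
  then show ?thesis using retreat_edge assms sys_edge_verts[OF R_system] unfolding retreat_def
    by metis
next
  assume "b \<notin> VR" "b' \<notin> VR"
  then show ?thesis using assms(3) unfolding retreat_def by simp
qed

lemma retreat_not_sink:
  assumes "continues b" "b \<notin> X"
  shows "retreat b \<notin> Y"
proof (cases "b \<in> VR")
  case True
  then have "(retreat b, b) \<in> E" using retreat_edge sys_edge_in_E[OF R_system] assms(2) by blast
  then show ?thesis using sink by auto
next
  case False
  then show ?thesis using assms(1) unfolding continues_def retreat_def by simp
qed

lemma retreat_not_missing:
  assumes "b \<notin> X"
  shows "retreat b \<notin> X1"
proof (cases "b \<in> VR")
  case True
  then have "retreat b \<in> VR" using retreat_edge sys_edge_verts[OF R_system] assms by blast
  then show ?thesis using missing_not_in_R by blast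
next
  case False
  then show ?thesis using assms missing_sources unfolding retreat_def by auto
qed

lemma entered_not_source: "entered b \<Longrightarrow> b \<notin> X"
  unfolding entered_def alt_walk_def using alt_step_not_source by blast

lemma entered_retreat_reachable: "entered b \<Longrightarrow> continues b \<Longrightarrow> reachable (retreat b)"
  unfolding reachable_def by blast

lemma alt_walk_snoc:
  assumes "alt_walk n u a" "continues (a n)" "alt_step (retreat (a n)) b"
  shows "alt_walk (Suc n) (u(Suc n := retreat (a n))) (a(Suc n := b))"
  using assms unfolding alt_walk_def by (auto simp: le_Suc_eq less_Suc_eq)

lemma reachable_step:
  assumes "reachable v" "alt_step v b"
  shows "entered b"
  using assms(1) unfolding reachable_def
proof (elim disjE exE conjE)
  assume "v \<in> X1"
  then have "alt_walk 0 (\<lambda>_. v) (\<lambda>_. b)" unfolding alt_walk_def using assms(2) by simp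
  then show ?thesis unfolding entered_def by blast
next
  fix b' assume "entered b'" "continues b'" "v = retreat b'"
  then obtain n u a where "alt_walk n u a" "a n = b'" unfolding entered_def by blast
  then show ?thesis
    using alt_walk_snoc assms(2) \<open>continues b'\<close> \<open>v = retreat b'\<close>
    unfolding entered_def by (metis fun_upd_same)
qed

lemma reachable_not_sink: "reachable v \<Longrightarrow> v \<notin> X1 \<Longrightarrow> v \<notin> Y"
  unfolding reachable_def using retreat_not_sink entered_not_source by blast

lemma reachable_pred:
  assumes "reachable v" "v \<in> VR" "v \<notin> X"
  shows "reachable (sys_pred R v)"
proof -
  have "v \<notin> Y" using reachable_not_sink assms missing_not_in_R by blast
  then have "entered v" using reachable_step assms unfolding alt_step_def by blast
  then show ?thesis
    using entered_retreat_reachable assms(2) unfolding continues_def retreat_def by fastforce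
qed

lemma R_pred_nth: "r \<in> R \<Longrightarrow> Suc i < length r \<Longrightarrow> sys_pred R (r ! Suc i) = r ! i"
  using sys_pred_eq[OF R_system] sys_edge_nth[OF R_system] by blast

lemma reachable_prefix:
  assumes "r \<in> R" "i < length r" "reachable (r ! i)" "j \<le> i"
  shows "reachable (r ! j)"
  using assms(2-4)
proof (induction i)
  case 0 then show ?case by simp
next
  case (Suc i)
  have "r ! Suc i \<in> VR" using assms(1) Suc.prems unfolding sys_verts_iff by blast
  moreover have "r ! Suc i \<notin> X" using path_nth_not_source sys_path[OF R_system assms(1)] Suc.prems
    by blast
  ultimately have "reachable (r ! i)"
    using reachable_pred R_pred_nth assms(1) Suc.prems by metis
  then show ?case using Suc by (cases "j = Suc i") auto
qed

lemma entered_pred_reachable: "entered b \<Longrightarrow> b \<in> VR \<Longrightarrow> reachable (sys_pred R b)"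
  using entered_retreat_reachable[of b] unfolding continues_def retreat_def by simp

end

text \<open>If there is no augmenting walk, the last visited vertex on each path of R (its initial
  vertex if none is visited) forms a separator. Following Q up to the separator and R after it joins all of X into the terminal vertices of R.\<close>

context augmentation
begin

definition visited :: "'a \<Rightarrow> bool" where
  "visited v \<longleftrightarrow> reachable v \<or> entered v"

definition separator_index :: "'a list \<Rightarrow> nat" where
  "separator_index r = (GREATEST i. i < length r \<and> (i = 0 \<or> visited (r ! i)))"

definition separator :: "'a set" where
  "separator = (\<lambda>r. r ! separator_index r) ` R"

definition before_separator :: "'a \<Rightarrow> bool" where
  "before_separator v \<longleftrightarrow> visited v \<and> v \<notin> separator"

lemma R_nonempty: "r \<in> R \<Longrightarrow> r \<noteq> []"
  using AB_pathD(1)[OF sys_path[OF R_system]] by blast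

lemma separator_index:
  assumes "r \<in> R"
  shows "separator_index r < length r"
    and "separator_index r = 0 \<or> visited (r ! separator_index r)"
    and "i < length r \<Longrightarrow> visited (r ! i) \<Longrightarrow> i \<le> separator_index r"
proof -
  let ?P = "\<lambda>i. i < length r \<and> (i = 0 \<or> visited (r ! i))"
  have P0: "?P 0" using R_nonempty[OF assms] by simp
  have bound: "?P i \<Longrightarrow> i \<le> length r" for i by simp
  have "?P (separator_index r)"
    unfolding separator_index_def using GreatestI_nat[of ?P 0 "length r", OF P0 bound] .
  then show "separator_index r < length r" "separator_index r = 0 \<or> visited (r ! separator_index r)"
    by simp_all
  show "i \<le> separator_index r" if "i < length r" "visited (r ! i)"
    unfolding separator_index_def using Greatest_le_nat[of ?P i "length r", OF _ bound] that by simp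
qed

lemma below_separator_reachable:
  assumes r: "r \<in> R" and i: "i < separator_index r"
  shows "reachable (r ! i)"
proof -
  let ?z = "separator_index r"
  have z: "?z < length r" "visited (r ! ?z)" "0 < ?z" using separator_index[OF r] i by auto
  show ?thesis
  proof (cases "reachable (r ! ?z)")
    case True then show ?thesis using reachable_prefix[OF r z(1)] i by simp
  next
    case False
    then have "entered (r ! ?z)" using z(2) unfolding visited_def by simp
    moreover have "r ! ?z \<in> VR" using z r unfolding sys_verts_iff by blast
    ultimately have "reachable (sys_pred R (r ! ?z))" using entered_pred_reachable by blast
    then have "reachable (r ! (?z - 1))" using R_pred_nth[OF r, of "?z - 1"] z by simp
    then show ?thesis using reachable_prefix[OF r, of "?z - 1" i] z i by simp
  qed
qed

lemma separator_on_path: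
  assumes "r \<in> R" "i < length r" "r ! i \<in> separator"
  shows "i = separator_index r"
proof -
  obtain r' where r': "r' \<in> R" "r ! i = r' ! separator_index r'"
    using assms(3) unfolding separator_def by auto
  then show ?thesis
    using sys_nth_unique[OF R_system assms(1) r'(1) assms(2) separator_index(1)[OF r'(1)]] by simp
qed

lemma separator_in_R: "separator \<subseteq> VR"
proof
  fix v assume "v \<in> separator"
  then obtain r where "r \<in> R" "v = r ! separator_index r" unfolding separator_def by auto
  then show "v \<in> VR" unfolding sys_verts_iff using separator_index(1) by blast
qed

lemma before_separator_below:
  assumes "r \<in> R" "i < length r" "before_separator (r ! i)"
  shows "i < separator_index r"
proof -
  have "i \<le> separator_index r"
    using separator_index(3) assms unfolding before_separator_def by blast
  moreover have "i \<noteq> separator_index r"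
    using assms unfolding before_separator_def separator_def by auto
  ultimately show ?thesis by simp
qed

lemma below_separator_before:
  assumes "r \<in> R" "i < separator_index r"
  shows "before_separator (r ! i)"
proof -
  have "visited (r ! i)" using below_separator_reachable assms unfolding visited_def by blast
  moreover have "r ! i \<notin> separator"
    using separator_on_path[OF assms(1), of i] separator_index(1)[OF assms(1)] assms(2) by auto
  ultimately show ?thesis unfolding before_separator_def by simp
qed

context
  assumes no_augmenting: "\<not> augmenting" and missing_not_sinks: "X1 \<inter> Y = {}"
begin

lemma before_not_sink:
  assumes "before_separator v"
  shows "v \<notin> Y"
proof (cases "v \<in> VR")
  case True
  then obtain r i where ri: "r \<in> R" "i < length r" "r ! i = v" unfolding sys_verts_iff by blast
  have "Suc i < length r" using before_separator_below ri assms separator_index(1)[OF ri(1)]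
    by fastforce
  then have "(v, r ! Suc i) \<in> E" using AB_pathD(4)[OF sys_path[OF R_system ri(1)]] ri by blast
  then show ?thesis using sink by auto
next
  case False
  have "reachable v \<or> entered v" using assms unfolding before_separator_def visited_def by simp
  then show ?thesis
    using reachable_not_sink missing_not_sinks no_augmenting False
    unfolding augmenting_def entered_def by blast
qed

lemma before_reachable:
  assumes "before_separator v"
  shows "reachable v"
proof (cases "v \<in> VR")
  case True
  then obtain r i where ri: "r \<in> R" "i < length r" "r ! i = v" unfolding sys_verts_iff by blast
  then show ?thesis using before_separator_below below_separator_reachable assms by blast
next
  case False
  then show ?thesis
    using assms before_not_sink entered_retreat_reachable[of v]
    unfolding before_separator_def visited_def continues_def retreat_def by auto
qed

lemma before_separator_edge:
  assumes "(v, w) \<in> E" "before_separator v"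
  shows "before_separator w \<or> w \<in> separator"
proof (cases "sys_edge R v w")
  case True
  then obtain r i where ri: "r \<in> R" "Suc i < length r" "r ! i = v" "r ! Suc i = w"
    unfolding sys_edge_def by blast
  have "i < separator_index r" using before_separator_below ri assms(2) by simp
  then consider "Suc i = separator_index r" | "Suc i < separator_index r" by linarith
  then show ?thesis
    using below_separator_before ri unfolding separator_def by cases auto
next
  case False
  then have "alt_step v w" unfolding alt_step_def using assms by simp
  then have "entered w" using reachable_step before_reachable assms by blast
  then show ?thesis unfolding before_separator_def visited_def by blast
qed

lemma before_separator_pred:
  assumes "sys_edge R v w" "before_separator w \<or> w \<in> separator"
  shows "before_separator v"
proof -
  obtain r i where ri: "r \<in> R" "Suc i < length r" "r ! i = v" "r ! Suc i = w"
    using assms(1) unfolding sys_edge_def by blast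
  have "Suc i \<le> separator_index r"
    using assms(2) before_separator_below separator_on_path ri by fastforce
  then show ?thesis using below_separator_before ri by auto
qed

definition sep_succ :: "'a \<Rightarrow> 'a" where
  "sep_succ v = (if before_separator v then sys_succ Q v else sys_succ R v)"

definition sep_domain :: "'a set" where
  "sep_domain = {v. before_separator v \<and> v \<in> VQ} \<union> {v. \<not> before_separator v \<and> v \<in> VR}"

lemma sep_domain_closed:
  assumes "v \<in> sep_domain" "v \<notin> Y"
  shows "(v, sep_succ v) \<in> E \<and> sep_succ v \<in> sep_domain"
proof (cases "before_separator v")
  case True
  then have "sys_edge Q v (sys_succ Q v)"
    using sys_edge_succ[OF Q_system] assms unfolding sep_domain_def by simp
  moreover from this have "before_separator (sys_succ Q v) \<or> sys_succ Q v \<in> separator"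
    using before_separator_edge sys_edge_in_E[OF Q_system] True by blast
  ultimately show ?thesis
    using True sys_edge_in_E[OF Q_system] sys_edge_verts[OF Q_system] separator_in_R
      before_separator_def
    unfolding sep_domain_def sep_succ_def by auto
next
  case False
  then have "sys_edge R v (sys_succ R v)"
    using sys_edge_succ[OF R_system] assms unfolding sep_domain_def by simp
  moreover from this have "\<not> before_separator (sys_succ R v)"
    using before_separator_pred False by blast
  ultimately show ?thesis
    using False sys_edge_in_E[OF R_system] sys_edge_verts[OF R_system]
    unfolding sep_domain_def sep_succ_def by auto
qed

lemma sep_succ_before_neq_after:
  assumes "before_separator v" "v \<in> VQ" "v \<notin> Y" "\<not> before_separator v'" "v' \<in> VR" "v' \<notin> Y"
  shows "sep_succ v \<noteq> sep_succ v'"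
proof
  assume eq: "sep_succ v = sep_succ v'"
  have e: "sys_edge Q v (sys_succ Q v)" "sys_edge R v' (sys_succ R v')"
    using sys_edge_succ[OF Q_system assms(2,3)] sys_edge_succ[OF R_system assms(5,6)] .
  have "before_separator (sys_succ Q v) \<or> sys_succ Q v \<in> separator"
    using before_separator_edge sys_edge_in_E[OF Q_system e(1)] assms(1) by blast
  then have "before_separator v'"
    using before_separator_pred e(2) eq assms(1,4) unfolding sep_succ_def by simp
  then show False using assms(4) by simp
qed

lemma sep_succ_inj:
  assumes "v \<in> sep_domain" "v' \<in> sep_domain" "v \<notin> Y" "v' \<notin> Y" "sep_succ v = sep_succ v'"
  shows "v = v'"
proof (cases "before_separator v"; cases "before_separator v'")
  assume "before_separator v" "before_separator v'"
  then have "sys_edge Q v (sep_succ v)" "sys_edge Q v' (sep_succ v')"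
    using sys_edge_succ[OF Q_system] assms(1-4) unfolding sep_domain_def sep_succ_def by auto
  then show ?thesis using sys_edge_injective[OF Q_system] assms(5) by metis
next
  assume "\<not> before_separator v" "\<not> before_separator v'"
  then have "sys_edge R v (sep_succ v)" "sys_edge R v' (sep_succ v')"
    using sys_edge_succ[OF R_system] assms(1-4) unfolding sep_domain_def sep_succ_def by auto
  then show ?thesis using sys_edge_injective[OF R_system] assms(5) by metis
next
  assume "before_separator v" "\<not> before_separator v'"
  then show ?thesis
    using sep_succ_before_neq_after[of v v'] assms unfolding sep_domain_def by auto
next
  assume "\<not> before_separator v" "before_separator v'"
  then show ?thesis
    using sep_succ_before_neq_after[of v' v] assms unfolding sep_domain_def by auto
qed

lemma sep_orbit_reaches_sink_R:
  "\<not> before_separator v \<Longrightarrow> v \<in> VR \<Longrightarrow> \<exists>n. (sep_succ^^n) v \<in> Y"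
proof (induction "sys_rank R v" arbitrary: v rule: less_induct)
  case less
  show ?case
  proof (cases "v \<in> Y")
    case True then show ?thesis by (metis funpow_0)
  next
    case False
    have e: "sys_edge R v (sys_succ R v)" using sys_edge_succ[OF R_system less.prems(2) False] .
    have "sep_succ v = sys_succ R v" unfolding sep_succ_def using less.prems by simp
    then have "\<exists>n. (sep_succ^^n) (sep_succ v) \<in> Y"
      using less.hyps[of "sys_succ R v"] sys_rank_decreasing[OF R_system e]
        before_separator_pred[OF e]
        sys_edge_verts[OF R_system e] less.prems by auto
    then show ?thesis by (rule funpow_reaches_if_Suc_reaches)
  qed
qed

lemma sep_orbit_reaches_sink_Q:
  "before_separator v \<Longrightarrow> v \<in> VQ \<Longrightarrow> \<exists>n. (sep_succ^^n) v \<in> Y"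
proof (induction "sys_rank Q v" arbitrary: v rule: less_induct)
  case less
  show ?case
  proof (cases "v \<in> Y")
    case True then show ?thesis by (metis funpow_0)
  next
    case False
    have e: "sys_edge Q v (sys_succ Q v)" using sys_edge_succ[OF Q_system less.prems(2) False] .
    have f: "sep_succ v = sys_succ Q v" unfolding sep_succ_def using less.prems by simp
    have "sep_succ v \<in> sep_domain"
      using sep_domain_closed less.prems False unfolding sep_domain_def by blast
    then have "\<exists>n. (sep_succ^^n) (sep_succ v) \<in> Y"
      using less.hyps[of "sep_succ v"] sys_rank_decreasing[OF Q_system e] f sep_orbit_reaches_sink_R
      unfolding sep_domain_def by auto
    then show ?thesis by (rule funpow_reaches_if_Suc_reaches)
  qed
qed

lemma sources_in_sep_domain: "X \<subseteq> sep_domain"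
proof
  fix x assume x: "x \<in> X"
  have "x \<in> X1 \<Longrightarrow> before_separator x"
    using separator_in_R missing_not_in_R unfolding before_separator_def visited_def reachable_def
    by blast
  then show "x \<in> sep_domain"
    using x sources_in_Q covered_in_R unfolding sep_domain_def by blast
qed

lemma joining_into_Vplus: "\<exists>T. T \<in> joinings V E X Y \<and> Vplus T \<subseteq> Vplus R"
proof -
  interpret sep: successor_orbits V E X Y sep_succ sep_domain
    using sep_domain_closed sep_succ_inj
    by (intro successor_orbits.intro sources_sinks_axioms successor_orbits_axioms.intro) blast+
  have "\<exists>T. AB_path_system V E X Y T \<and> Vminus T = X \<and> Vplus T \<subseteq> Vplus R"
  proof (rule sep.orbit_path_system)
    show "X \<subseteq> X \<inter> sep_domain" using sources_in_sep_domain by blast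
    show "\<exists>n. (sep_succ^^n) x \<in> Y" if "x \<in> X" for x
      using sources_in_sep_domain that sep_orbit_reaches_sink_R sep_orbit_reaches_sink_Q
      unfolding sep_domain_def by blast
    show "sep_succ v \<in> Vplus R" if "v \<in> sep_domain" "v \<notin> Y" "sep_succ v \<in> Y" for v
    proof -
      have "sep_succ v \<in> sep_domain" using sep_domain_closed that(1,2) by blast
      moreover have "\<not> before_separator (sep_succ v)" using before_not_sink that(3) by blast
      ultimately have "sep_succ v \<in> VR" unfolding sep_domain_def by blast
      then show ?thesis using sys_verts_sink_Vplus[OF R_system] that(3) by blast
    qed
    show "X \<inter> Y \<subseteq> Vplus R"
      using missing_not_sinks covered_in_R sys_verts_sink_Vplus[OF R_system] by blast
  qed
  then show ?thesis unfolding joinings_def by blast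
qed

end

end

text \<open>A shortest augmenting walk never arrives twice at the same vertex. Exchanging along it,
  i.e. leaving each vertex u k towards a k and every other vertex of R along R, yields a successor
  function whose orbits from the sources X - X1 and from u 0 are disjoint paths into the terminal
  vertices of R and the new terminal vertex a n.\<close>

context augmentation
begin

lemma alt_walk_shortcut:
  assumes w: "alt_walk n u a" and kl: "k < l" "l \<le> n" and eq: "a k = a l"
  shows "\<exists>n' u' a'. alt_walk n' u' a' \<and> a' n' = a n \<and> n' < n"
proof -
  define d where "d = l - k"
  define s where "s i = (if i \<le> k then i else i + d)" for i
  \<comment> \<open>s skips the steps k+1, ..., l; the step after s i continues from the retreat of a (t i)\<close>
  define t where "t i = (if i = k then l else s i)" for i
  have shift: "a (s i) = a (t i)" "s (Suc i) = Suc (t i)" for i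
    using kl eq unfolding s_def t_def d_def by auto
  have bounds: "i \<le> n - d \<Longrightarrow> s i \<le> n" "i < n - d \<Longrightarrow> t i < n" for i
    using kl unfolding s_def t_def d_def by auto
  have "alt_walk (n - d) (u \<circ> s) (a \<circ> s)"
    unfolding alt_walk_def
  proof (intro conjI allI impI)
    show "(u \<circ> s) 0 \<in> X1" using w unfolding alt_walk_def s_def by simp
  next
    fix i assume "i \<le> n - d"
    then show "alt_step ((u \<circ> s) i) ((a \<circ> s) i)" using w bounds(1) unfolding alt_walk_def by simp
  next
    fix i assume "i < n - d"
    then show "continues ((a \<circ> s) i)" "(u \<circ> s) (Suc i) = retreat ((a \<circ> s) i)"
      using w bounds(2) shift unfolding alt_walk_def by simp_all
  qed
  moreover have "a (s (n - d)) = a n"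
  proof (cases "n - d \<le> k")
    case True
    then have "n - d = k" "l = n" using kl unfolding d_def by auto
    then show ?thesis using eq unfolding s_def by simp
  next
    case False then show ?thesis using kl unfolding s_def d_def by simp
  qed
  moreover have "n - d < n" using kl unfolding d_def by simp
  ultimately show ?thesis by (metis comp_apply)
qed

context
  fixes n :: nat and u a :: "nat \<Rightarrow> 'a"
  assumes walk: "alt_walk n u a" and end_sink: "a n \<in> Y" and end_not_R: "a n \<notin> VR"
    and shortest: "\<And>n' u' a'. alt_walk n' u' a' \<Longrightarrow> a' n' \<in> Y \<Longrightarrow> a' n' \<notin> VR \<Longrightarrow> n \<le> n'"
begin

lemma walk_start: "u 0 \<in> X1"
  and walk_step: "\<And>i. i \<le> n \<Longrightarrow> alt_step (u i) (a i)"
  and walk_continue: "\<And>i. i < n \<Longrightarrow> continues (a i) \<and> u (Suc i) = retreat (a i)"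
  using walk unfolding alt_walk_def by auto

lemma walk_target_inj:
  assumes "k \<le> n" "l \<le> n" "a k = a l"
  shows "k = l"
proof (rule ccontr)
  assume "k \<noteq> l"
  then have "\<exists>n' u' a'. alt_walk n' u' a' \<and> a' n' = a n \<and> n' < n"
    using alt_walk_shortcut[OF walk] assms by (metis linorder_neqE_nat)
  then show False using shortest end_sink end_not_R by fastforce
qed

lemma walk_target_not_source: "k \<le> n \<Longrightarrow> a k \<notin> X"
  using walk_step alt_step_not_source by blast

lemma walk_origin_inj:
  assumes "k \<le> n" "l \<le> n" "u k = u l"
  shows "k = l"
proof -
  have "k = l" if kl: "k < l" "l \<le> n" "u k = u l" for k l
  proof -
    obtain l' where l: "l = Suc l'" using kl by (cases l) auto
    have "u l = retreat (a l')" using walk_continue[of l'] l kl by auto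
    show ?thesis
    proof (cases k)
      case 0
      then show ?thesis
        using retreat_not_missing walk_target_not_source walk_start kl l \<open>u l = retreat (a l')\<close>
        by simp
    next
      case (Suc k')
      have "retreat (a k') = retreat (a l')"
        using walk_continue[of k'] walk_continue[of l'] Suc l kl by simp
      then have "a k' = a l'" using retreat_inj walk_target_not_source Suc l kl by simp
      then show ?thesis using walk_target_inj Suc l kl by simp
    qed
  qed
  then show ?thesis using assms by (metis linorder_neqE_nat)
qed

definition walk_origins :: "'a set" where
  "walk_origins = u ` {..n}"

definition aug_succ :: "'a \<Rightarrow> 'a" where
  "aug_succ v = (if v \<in> walk_origins then a (THE k. k \<le> n \<and> u k = v) else sys_succ R v)"

definition aug_domain :: "'a set" where
  "aug_domain = {u k |k. k \<le> n \<and> a k \<noteq> u k} \<union> (VR - walk_origins) \<union> {a n}"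

lemma aug_succ_origin: "k \<le> n \<Longrightarrow> aug_succ (u k) = a k"
proof -
  assume k: "k \<le> n"
  then have "(THE j. j \<le> n \<and> u j = u k) = k" using walk_origin_inj by blast
  then show ?thesis using k unfolding aug_succ_def walk_origins_def by simp
qed

lemma aug_succ_R: "v \<notin> walk_origins \<Longrightarrow> aug_succ v = sys_succ R v"
  unfolding aug_succ_def by simp

lemma walk_turn_pred:
  assumes "j \<le> n" "a j = u j"
  shows "j < n \<and> u (Suc j) = sys_pred R (u j)"
proof -
  have "u j \<in> VR" using walk_step[OF assms(1)] alt_step_turn assms(2) by force
  then have "j \<noteq> n" using end_not_R assms(2) by auto
  then have "j < n" using assms(1) by simp
  moreover have "u (Suc j) = retreat (a j)" using walk_continue \<open>j < n\<close> by blast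
  ultimately show ?thesis using \<open>u j \<in> VR\<close> assms(2) unfolding retreat_def by simp
qed

lemma walk_target_in_aug_domain:
  assumes k: "k \<le> n" "a k \<noteq> u k"
  shows "a k \<in> aug_domain"
proof (cases "k = n")
  case True then show ?thesis unfolding aug_domain_def by simp
next
  case False
  then have kn: "k < n" using k by simp
  have c: "continues (a k)" "u (Suc k) = retreat (a k)" using walk_continue kn by auto
  show ?thesis
  proof (cases "a k \<in> VR")
    case False
    then have uk: "u (Suc k) = a k" using c unfolding retreat_def by simp
    have "a (Suc k) \<noteq> u (Suc k)"
    proof
      assume "a (Suc k) = u (Suc k)"
      then have "u (Suc k) \<in> VR" using walk_step[of "Suc k"] alt_step_turn kn by fastforce
      then show False using uk False by simp
    qed
    then have "a k = u (Suc k) \<and> Suc k \<le> n \<and> a (Suc k) \<noteq> u (Suc k)" using uk kn by simp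
    then have "a k \<in> {u k' |k'. k' \<le> n \<and> a k' \<noteq> u k'}" by blast
    then show ?thesis unfolding aug_domain_def by blast
  next
    case True
    show ?thesis
    proof (cases "a k \<in> walk_origins")
      case False then show ?thesis unfolding aug_domain_def using True by simp
    next
      case True
      then obtain j where j: "j \<le> n" "a k = u j" unfolding walk_origins_def by auto
      have "a j \<noteq> u j"
      proof
        assume "a j = u j"
        then have "j = k" using walk_target_inj[of j k] j k by simp
        then show False using j k \<open>a j = u j\<close> by simp
      qed
      then show ?thesis unfolding aug_domain_def using j by blast
    qed
  qed
qed

lemma R_succ_in_aug_domain:
  assumes "v \<in> VR" "v \<notin> walk_origins" "v \<notin> Y"
  shows "sys_succ R v \<in> aug_domain"
proof -
  have e: "sys_edge R v (sys_succ R v)" using sys_edge_succ[OF R_system assms(1,3)] .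
  show ?thesis
  proof (cases "sys_succ R v \<in> walk_origins")
    case False then show ?thesis unfolding aug_domain_def using sys_edge_verts[OF R_system e]
      by simp
  next
    case True
    then obtain j where j: "j \<le> n" "sys_succ R v = u j" unfolding walk_origins_def by auto
    have "a j \<noteq> u j"
    proof
      assume "a j = u j"
      then have "j < n" "u (Suc j) = v" using walk_turn_pred j sys_pred_eq[OF R_system e] by auto
      then show False using assms(2) unfolding walk_origins_def by auto
    qed
    then show ?thesis unfolding aug_domain_def using j by blast
  qed
qed

lemma aug_domain_cases:
  assumes "v \<in> aug_domain" "v \<notin> Y"
  obtains k where "k \<le> n" "v = u k" "a k \<noteq> u k" | "v \<in> VR" "v \<notin> walk_origins"
proof -
  have "v \<noteq> a n" using assms(2) end_sink by blast
  then show ?thesis using assms(1) that unfolding aug_domain_def by auto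
qed

lemma aug_domain_closed:
  assumes "v \<in> aug_domain" "v \<notin> Y"
  shows "(v, aug_succ v) \<in> E \<and> aug_succ v \<in> aug_domain"
  using assms
proof (cases rule: aug_domain_cases)
  case (1 k)
  then have "(u k, a k) \<in> E" using walk_step alt_step_forward by blast
  then show ?thesis using 1 aug_succ_origin walk_target_in_aug_domain by simp
next
  case 2
  then have "sys_edge R v (sys_succ R v)" using sys_edge_succ[OF R_system] assms(2) by blast
  then show ?thesis
    using 2 sys_edge_in_E[OF R_system] aug_succ_R R_succ_in_aug_domain assms(2) by simp
qed

lemma aug_succ_origin_neq_R:
  assumes "k \<le> n" "v \<in> VR" "v \<notin> walk_origins" "v \<notin> Y"
  shows "aug_succ (u k) \<noteq> aug_succ v"
proof
  assume "aug_succ (u k) = aug_succ v"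
  have e: "sys_edge R v (sys_succ R v)" using sys_edge_succ[OF R_system assms(2,4)] .
  have eq: "a k = sys_succ R v"
    using \<open>aug_succ (u k) = aug_succ v\<close> assms(1,3) aug_succ_origin aug_succ_R by simp
  have "a k \<in> VR" using sys_edge_verts[OF R_system e] eq by simp
  then have "k \<noteq> n" using end_not_R by auto
  then have kn: "k < n" using assms(1) by simp
  have "u (Suc k) = v"
    using walk_continue[OF kn] \<open>a k \<in> VR\<close> sys_pred_eq[OF R_system e] eq unfolding retreat_def
      by simp
  then show False using assms(3) kn unfolding walk_origins_def by auto
qed

lemma aug_succ_inj:
  assumes "v \<in> aug_domain" "v' \<in> aug_domain" "v \<notin> Y" "v' \<notin> Y" "aug_succ v = aug_succ v'"
  shows "v = v'"
  using assms(1,3)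
proof (cases rule: aug_domain_cases)
  case (1 k)
  note v = this
  from assms(2,4) show ?thesis
  proof (cases rule: aug_domain_cases)
    case (1 k')
    then have "a k = a k'" using v assms(5) aug_succ_origin by simp
    then show ?thesis using walk_target_inj[of k k'] v 1 by simp
  next
    case 2 then show ?thesis using aug_succ_origin_neq_R[of k v'] v assms(4,5) by simp
  qed
next
  case 2
  note v = this
  from assms(2,4) show ?thesis
  proof (cases rule: aug_domain_cases)
    case (1 k') then show ?thesis using aug_succ_origin_neq_R[of k' v] v assms(3,5) by simp
  next
    case 2
    then have "sys_edge R v (aug_succ v)" "sys_edge R v' (aug_succ v')"
      using \<open>v \<in> VR\<close> \<open>v \<notin> walk_origins\<close> sys_edge_succ[OF R_system] assms(3,4) aug_succ_R by simp_all
    then show ?thesis using sys_edge_injective[OF R_system] assms(5) by metis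
  qed
qed

definition aug_starts :: "'a set" where
  "aug_starts = (X - X1) \<union> {u 0}"

lemma aug_starts_in_aug_domain: "aug_starts \<subseteq> X \<inter> aug_domain"
proof
  fix x assume x: "x \<in> aug_starts"
  have "x \<in> aug_domain"
  proof (cases "x = u 0")
    case True
    have "a 0 \<noteq> u 0"
    proof
      assume "a 0 = u 0"
      then have "u 0 \<in> VR" using walk_step[of 0] alt_step_turn by fastforce
      then show False using walk_start missing_not_in_R by blast
    qed
    then show ?thesis using True unfolding aug_domain_def by blast
  next
    case False
    then have x': "x \<in> X - X1" "x \<in> VR" using x covered_in_R unfolding aug_starts_def by auto
    show ?thesis
    proof (cases "x \<in> walk_origins")
      case True
      then obtain j where j: "j \<le> n" "x = u j" unfolding walk_origins_def by auto
      have "a j \<noteq> u j" using walk_step[OF j(1)] alt_step_turn x' j(2) by force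
      then show ?thesis unfolding aug_domain_def using j by blast
    next
      case False then show ?thesis unfolding aug_domain_def using x' by simp
    qed
  qed
  then show "x \<in> X \<inter> aug_domain" using x walk_start missing_sources unfolding aug_starts_def by auto
qed

lemma aug_orbit_ends:
  assumes "v \<in> aug_domain" "v \<notin> Y" "aug_succ v \<in> Y"
  shows "aug_succ v \<in> Vplus R \<union> {a n}"
  using assms(1,2)
proof (cases rule: aug_domain_cases)
  case (1 k)
  then have succ: "aug_succ v = a k" using aug_succ_origin by simp
  show ?thesis
  proof (cases "k = n")
    case True then show ?thesis using succ by simp
  next
    case False
    then have "continues (a k)" using walk_continue 1 by simp
    then have "a k \<in> VR" using assms(3) succ unfolding continues_def by simp
    then show ?thesis using sys_verts_sink_Vplus[OF R_system] assms(3) succ by simp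
  qed
next
  case 2
  then have "sys_edge R v (aug_succ v)" using sys_edge_succ[OF R_system] assms(2) aug_succ_R by simp
  then show ?thesis using sys_edge_verts[OF R_system] sys_verts_sink_Vplus[OF R_system] assms(3)
    by blast
qed

lemma aug_starts_sinks: "aug_starts \<inter> Y \<subseteq> Vplus R \<union> {a n}"
proof
  fix x assume x: "x \<in> aug_starts \<inter> Y"
  have "x \<noteq> u 0" using walk_step[of 0] alt_step_not_sink x by auto
  then have "x \<in> VR" using x covered_in_R unfolding aug_starts_def by auto
  then show "x \<in> Vplus R \<union> {a n}" using sys_verts_sink_Vplus[OF R_system] x by simp
qed

lemma aug_successor_orbits: "successor_orbits V E X Y aug_succ aug_domain"
  using aug_domain_closed aug_succ_inj
  by (intro successor_orbits.intro sources_sinks_axioms successor_orbits_axioms.intro) blast+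

text \<open>An orbit avoiding Y is injective, so it meets the finite set of walk origins only finitely
  often; afterwards it follows R, where the distance to the terminal vertex decreases.\<close>

lemma aug_orbit_reaches_sink:
  assumes x: "x \<in> aug_starts"
  shows "\<exists>m. (aug_succ^^m) x \<in> Y"
proof (rule ccontr)
  interpret aug: successor_orbits V E X Y aug_succ aug_domain by (rule aug_successor_orbits)
  assume "\<nexists>m. (aug_succ^^m) x \<in> Y"
  then have not_sink: "(aug_succ^^m) x \<notin> Y" for m by blast
  have xG: "x \<in> X \<inter> aug_domain" using aug_starts_in_aug_domain x by auto
  have "inj (\<lambda>m. (aug_succ^^m) x)"
  proof (rule injI)
    fix i j assume "(aug_succ^^i) x = (aug_succ^^j) x"
    then show "i = j" using aug.orbits_meet[OF xG xG, of i j] not_sink by blast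
  qed
  then have "finite ((\<lambda>m. (aug_succ^^m) x) -` walk_origins)"
    by (rule finite_vimageI[rotated]) (simp add: walk_origins_def)
  then obtain N where N: "\<And>m. (aug_succ^^m) x \<in> walk_origins \<Longrightarrow> m < N"
    unfolding finite_nat_set_iff_bounded by blast
  have on_R: "(aug_succ^^m) x \<in> VR - walk_origins" if "N \<le> m" for m
  proof -
    have "(aug_succ^^m) x \<in> aug_domain" using aug.orbit_in_domain xG not_sink by blast
    from this not_sink show ?thesis
    proof (cases rule: aug_domain_cases)
      case (1 k)
      then have "(aug_succ^^m) x \<in> walk_origins" unfolding walk_origins_def by auto
      then show ?thesis using N that by fastforce
    qed simp
  qed
  have "sys_rank R ((aug_succ^^(N + m)) x) + m \<le> sys_rank R ((aug_succ^^N) x)" for m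
  proof (induction m)
    case 0 then show ?case by simp
  next
    case (Suc m)
    let ?v = "(aug_succ^^(N + m)) x"
    have "?v \<in> VR - walk_origins" using on_R by simp
    then have "sys_edge R ?v (aug_succ ?v)"
      using sys_edge_succ[OF R_system _ not_sink] aug_succ_R by simp
    then have "sys_rank R (aug_succ ?v) < sys_rank R ?v" by (rule sys_rank_decreasing[OF R_system])
    then show ?case using Suc.IH by simp
  qed
  from this[of "Suc (sys_rank R ((aug_succ^^N) x))"] show False by simp
qed

lemma shortest_walk_augments:
  "\<exists>R'. AB_path_system V E X Y R' \<and> Vminus R' = (X - X1) \<union> {u 0} \<and> Vplus R' \<subseteq> Vplus R \<union> {a n}"
proof -
  interpret aug: successor_orbits V E X Y aug_succ aug_domain by (rule aug_successor_orbits)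
  show ?thesis
    using aug.orbit_path_system[OF aug_starts_in_aug_domain aug_orbit_reaches_sink
        aug_orbit_ends aug_starts_sinks]
    unfolding aug_starts_def .
qed

end

lemma augmenting_augments:
  assumes augmenting
  obtains R' x y where "x \<in> X1" "y \<in> Y - Vplus R" "AB_path_system V E X Y R'"
    "Vminus R' = (X - X1) \<union> {x}" "Vplus R' \<subseteq> Vplus R \<union> {y}"
proof -
  let ?aug = "\<lambda>n. \<exists>u a. alt_walk n u a \<and> a n \<in> Y \<and> a n \<notin> VR"
  define n where "n = (LEAST n. ?aug n)"
  have "?aug n" unfolding n_def using assms unfolding augmenting_def by (rule LeastI_ex)
  then obtain u a where w: "alt_walk n u a" "a n \<in> Y" "a n \<notin> VR" by blast
  have shortest: "n \<le> n'" if "alt_walk n' u' a'" "a' n' \<in> Y" "a' n' \<notin> VR" for n' u' a'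
    unfolding n_def using that by (blast intro: Least_le)
  have "\<exists>R'. AB_path_system V E X Y R' \<and> Vminus R' = (X - X1) \<union> {u 0} \<and>
      Vplus R' \<subseteq> Vplus R \<union> {a n}"
  proof (rule shortest_walk_augments[OF w])
    fix n' u' a' assume "alt_walk n' u' a'" "a' n' \<in> Y" "a' n' \<notin> VR"
    then show "n \<le> n'" by (rule shortest)
  qed
  then obtain R' where "AB_path_system V E X Y R'" "Vminus R' = (X - X1) \<union> {u 0}"
    "Vplus R' \<subseteq> Vplus R \<union> {a n}" by blast
  moreover have "u 0 \<in> X1" using w(1) unfolding alt_walk_def by simp
  moreover have "a n \<in> Y - Vplus R" using w Vplus_sys_verts[OF R_system] by blast
  ultimately show ?thesis using that by blast
qed

end

lemma AB_path_system_insert_trivial: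
  assumes "AB_path_system V E A B R" "x \<in> V" "x \<in> A" "x \<in> B" "x \<notin> sys_verts R"
  shows "AB_path_system V E A B (insert [x] R)"
proof -
  have "AB_path V E A B [x]" using assms(2-4) unfolding AB_path_def dpath_def by auto
  moreover have "x \<notin> set r" if "r \<in> R" for r using assms(5) that unfolding sys_verts_def by auto
  ultimately show ?thesis using assms(1) unfolding AB_path_system_def by auto
qed

lemma (in sources_sinks) joining_missing_sink:
  assumes "Q \<in> joinings V E X Y"
  shows "finite X1 \<Longrightarrow> X1 \<subseteq> X \<Longrightarrow> AB_path_system V E X Y R \<Longrightarrow> Vminus R = X - X1 \<Longrightarrow>
    finite B \<Longrightarrow> B \<subseteq> Y - Vplus R \<Longrightarrow> card X1 < card B \<Longrightarrow> \<exists>T\<in>joinings V E X Y. Vplus T \<noteq> Y"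
proof (induction "card X1" arbitrary: X1 R B rule: less_induct)
  case less
  interpret augmentation V E X Y Q R X1
    using less.prems assms
    by (intro augmentation.intro sources_sinks_axioms augmentation_axioms.intro) auto
  have reduce: "\<exists>T\<in>joinings V E X Y. Vplus T \<noteq> Y"
    if x: "x \<in> X1" and R': "AB_path_system V E X Y R'" "Vminus R' = (X - X1) \<union> {x}"
      "Vplus R' \<subseteq> Vplus R \<union> {y}" for x y R'
  proof (rule less.hyps)
    show "card (X1 - {x}) < card X1" using less.prems(1) x by (rule card_Diff1_less)
    have "card B - 1 \<le> card (B - {y})" by (simp add: card_Diff_singleton_if)
    moreover have "0 < card X1" using x less.prems(1) card_gt_0_iff by blast
    ultimately show "card (X1 - {x}) < card (B - {y})" using x less.prems(1,7) by simp
    show "Vminus R' = X - (X1 - {x})" using R'(2) x less.prems(2) by auto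
    show "B - {y} \<subseteq> Y - Vplus R'" using less.prems(6) R'(3) by auto
  qed (use less.prems R' in auto)
  consider (trivial) x where "x \<in> X1" "x \<in> Y" | (augmenting) augmenting
    | (separated) "X1 \<inter> Y = {}" "\<not> augmenting" by blast
  then show ?case
  proof cases
    case trivial
    then have "AB_path_system V E X Y (insert [x] R)"
      using AB_path_system_insert_trivial[OF R_system] sources_in_V missing_sources missing_not_in_R
      by blast
    moreover have "Vminus (insert [x] R) = (X - X1) \<union> {x}" "Vplus (insert [x] R) \<subseteq> Vplus R \<union> {x}"
      using R_Vminus unfolding Vminus_def Vplus_def by auto
    ultimately show ?thesis using reduce trivial(1) by blast
  next
    case augmenting
    then obtain R' x y where "x \<in> X1" "AB_path_system V E X Y R'"
      "Vminus R' = (X - X1) \<union> {x}" "Vplus R' \<subseteq> Vplus R \<union> {y}"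
      by (rule augmenting_augments)
    then show ?thesis by (rule reduce)
  next
    case separated
    obtain T where T: "T \<in> joinings V E X Y" "Vplus T \<subseteq> Vplus R"
      using joining_into_Vplus[OF separated(2,1)] by blast
    obtain b where "b \<in> B" using less.prems(7) by fastforce
    then show ?thesis using less.prems(6) T by blast
  qed
qed

lemma remove_paths_deficit:
  assumes P: "AB_path_system V E A B P" "Vminus P = A" and y: "y \<in> B - Vplus P"
    and D: "D \<subseteq> P" "finite D"
  shows "Vminus (P - D) = A - hd ` D"
    and "insert y (last ` D) \<subseteq> B - Vplus (P - D)"
    and "card (hd ` D) < card (insert y (last ` D))"
proof -
  show "Vminus (P - D) = A - hd ` D"
    using inj_on_image_set_diff[OF sys_inj_on_hd[OF P(1)] _ D(1)] P(2) unfolding Vminus_def by simp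
  have "last ` D \<subseteq> B" using D(1) AB_pathD(6) sys_path[OF P(1)] by blast
  moreover have "Vplus (P - D) = last ` P - last ` D"
    using inj_on_image_set_diff[OF sys_inj_on_last[OF P(1)] _ D(1)] unfolding Vplus_def by simp
  ultimately show "insert y (last ` D) \<subseteq> B - Vplus (P - D)" using y unfolding Vplus_def by auto
  have "y \<notin> last ` D" using y D(1) unfolding Vplus_def by blast
  then have "card (insert y (last ` D)) = Suc (card D)"
    using card_image[OF inj_on_subset[OF sys_inj_on_last[OF P(1)] D(1)]] D(2) by simp
  moreover have "card (hd ` D) = card D"
    using card_image[OF inj_on_subset[OF sys_inj_on_hd[OF P(1)] D(1)]] .
  ultimately show "card (hd ` D) < card (insert y (last ` D))" by simp
qed

lemma AB_path_avoiding:
  assumes "AB_path V E A B p" "set p \<inter> (S \<union> fst ` F) = {}"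
  shows "AB_path (V - S) (E \<inter> ((V - S) \<times> (V - S)) - F) A B p"
proof -
  have "set p \<subseteq> V - S" using AB_pathD(3)[OF assms(1)] assms(2) by blast
  moreover have "(p ! i, p ! Suc i) \<in> E \<inter> ((V - S) \<times> (V - S)) - F" if i: "Suc i < length p" for i
  proof -
    have "p ! i \<in> set p" "p ! Suc i \<in> set p" using i by simp_all
    then have "p ! i \<notin> fst ` F" "p ! i \<in> V - S" "p ! Suc i \<in> V - S"
      using assms(2) \<open>set p \<subseteq> V - S\<close> by blast+
    then show ?thesis using AB_pathD(4)[OF assms(1) i] by force
  qed
  ultimately show ?thesis using assms(1) unfolding AB_path_def dpath_def by blast
qed

lemma sys_avoiding_finite_subgraph:
  assumes "AB_path_system V E A B P" "finite S" "finite F"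
  obtains D where "D \<subseteq> P" "finite D"
    "AB_path_system (V - S) (E \<inter> ((V - S) \<times> (V - S)) - F) A B (P - D)"
proof
  let ?D = "{p \<in> P. set p \<inter> (S \<union> fst ` F) \<noteq> {}}"
  show "?D \<subseteq> P" by blast
  show "finite ?D" using finite_sys_paths_meeting[OF assms(1)] assms(2,3) by simp
  show "AB_path_system (V - S) (E \<inter> ((V - S) \<times> (V - S)) - F) A B (P - ?D)"
    using assms(1) AB_path_avoiding[of V E A B _ S F] unfolding AB_path_system_def by auto
qed

theorem lemma4p4:
  fixes V :: "'a set" and E :: "('a \<times> 'a) set"
    and X Y S :: "'a set" and F :: "('a \<times> 'a) set"
  assumes "digraph V E"
    and "X \<subseteq> V" and "Y \<subseteq> V"
    and "\<forall>x\<in>X. \<forall>u. (u, x) \<notin> E"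
    and "\<forall>y\<in>Y. \<forall>w. (y, w) \<notin> E"
    and "S \<subseteq> V" and "finite S"
    and "F \<subseteq> E \<inter> ((V - S) \<times> (V - S))" and "finite F"
    and "X \<subseteq> V - S" and "Y \<subseteq> V - S"
    and "incompressible (V - S) (E \<inter> ((V - S) \<times> (V - S)) - F) X Y"
  shows "incompressible V E X Y"
proof -
  let ?V' = "V - S" and ?E' = "E \<inter> ((V - S) \<times> (V - S)) - F"
  interpret D': sources_sinks ?V' ?E' X Y
    using assms(1,4,5,10) by unfold_locales (auto simp: digraph_def)
  obtain Q where Q: "Q \<in> joinings ?V' ?E' X Y"
    using assms(12) unfolding incompressible_def joinable_def by blast
  have "Vplus P = Y" if P: "AB_path_system V E X Y P" "Vminus P = X" for P
  proof (rule ccontr)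
    assume "Vplus P \<noteq> Y"
    then obtain y where y: "y \<in> Y - Vplus P" using Vplus_subset[OF P(1)] by blast
    obtain D where D: "D \<subseteq> P" "finite D" and R: "AB_path_system ?V' ?E' X Y (P - D)"
      using sys_avoiding_finite_subgraph[OF P(1) assms(7,9)] .
    have "hd ` D \<subseteq> X" using D(1) P(2) unfolding Vminus_def by blast
    then obtain T where "T \<in> joinings ?V' ?E' X Y" "Vplus T \<noteq> Y"
      using D'.joining_missing_sink[OF Q, of "hd ` D" "P - D" "insert y (last ` D)"] R
        remove_paths_deficit[OF P y D] D(2) by auto
    then show False using assms(12) unfolding incompressible_def by blast
  qed
  moreover have "joinable V E X Y"
    using joinings_mono[OF Q] unfolding joinable_def by blast
  ultimately show ?thesis unfolding incompressible_def joinings_def by auto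
qed

end
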